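(* Let $H$ be a function with domain $\omega$ such that each $H(n)$ is a finite set with at least two elements. If $\mathcal U\in V$ is a P-point ultrafilter on $\omega$, then $\Vdash_{PT_H}$ "$\mathcal U$ generates an ultrafilter", i.e. in the extension, for every $x\subseteq\omega$ there is $u\in\mathcal U$ with $u\subseteq x$ or $u\subseteq\omega\setminus x$.
   Context: An ultrafilter $\mathcal U$ on $\omega$ is a P-point if for every sequence $\langle A_n:n<\omega\rangle$ of members of $\mathcal U$ there is $A\in\mathcal U$ with $A\setminus A_n$ finite for all $n$. $PT_H$ is the set of all $p$ such that (A) $p$ is a nonempty set of finite sequences closed under initial segments; (B) $\eta(l)\in H(l)$ for $\eta\in p$, $l<|\eta|$; (C) for $\eta\in p$, $\mathrm{succ}_p(\eta)=\{i:\eta^\frown i\in p\}$ is a singleton or equals $H(|\eta|)$; (D) every $\eta\in p$ has an extension $\nu\in p$ with $\mathrm{succ}_p(\nu)=H(|\nu|)$. $q$ is stronger than $p$ iff $q\subseteq p$. *)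

theory Defs
  imports Main
begin

definition ultrafilter_on_nat :: "nat set set \<Rightarrow> bool" where
  "ultrafilter_on_nat U \<longleftrightarrow>
     UNIV \<in> U \<and> {} \<notin> U \<and>
     (\<forall>A\<in>U. \<forall>B\<in>U. A \<inter> B \<in> U) \<and>
     (\<forall>A B. A \<in> U \<and> A \<subseteq> B \<longrightarrow> B \<in> U) \<and>
     (\<forall>A. A \<in> U \<or> - A \<in> U)"

definition p_point :: "nat set set \<Rightarrow> bool" where
  "p_point U \<longleftrightarrow> ultrafilter_on_nat U \<and>
     (\<forall>As :: nat \<Rightarrow> nat set. (\<forall>n. As n \<in> U) \<longrightarrow>
        (\<exists>A\<in>U. \<forall>n. finite (A - As n)))"

definition succ_of :: "'a list set \<Rightarrow> 'a list \<Rightarrow> 'a set" where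
  "succ_of p \<eta> = {i. \<eta> @ [i] \<in> p}"

definition PT :: "(nat \<Rightarrow> 'a set) \<Rightarrow> 'a list set set" where
  "PT H = {p. p \<noteq> {} \<and>
     (\<forall>\<eta>\<in>p. \<forall>k. take k \<eta> \<in> p) \<and>
     (\<forall>\<eta>\<in>p. \<forall>l<length \<eta>. \<eta> ! l \<in> H l) \<and>
     (\<forall>\<eta>\<in>p. (\<exists>i. succ_of p \<eta> = {i}) \<or> succ_of p \<eta> = H (length \<eta>)) \<and>
     (\<forall>\<eta>\<in>p. \<exists>\<nu>\<in>p. take (length \<eta>) \<nu> = \<eta> \<and> succ_of p \<nu> = H (length \<nu>))}"

text \<open>Names for subsets of omega, represented by their forcing sets:
  X n is the set of conditions forcing n in the named set.  A family X is
  the forcing-set family of some name iff each X n consists of conditions,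
  is open (closed under strengthening) and is closed under density below
  (if X n is dense below p then p is in X n).  Stronger = subset.\<close>

definition dense_below :: "'a list set set \<Rightarrow> 'a list set set \<Rightarrow> 'a list set \<Rightarrow> bool" where
  "dense_below P D p \<longleftrightarrow> (\<forall>q\<in>P. q \<subseteq> p \<longrightarrow> (\<exists>r\<in>D. r \<subseteq> q))"

definition set_name :: "'a list set set \<Rightarrow> (nat \<Rightarrow> 'a list set set) \<Rightarrow> bool" where
  "set_name P X \<longleftrightarrow>
     (\<forall>n. X n \<subseteq> P) \<and>
     (\<forall>n. \<forall>p\<in>X n. \<forall>q\<in>P. q \<subseteq> p \<longrightarrow> q \<in> X n) \<and>
     (\<forall>n. \<forall>p\<in>P. dense_below P (X n) p \<longrightarrow> p \<in> X n)"

definition forces_generates_ultrafilter :: "'a list set set \<Rightarrow> nat set set \<Rightarrow> bool" where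
  "forces_generates_ultrafilter P U \<longleftrightarrow>
     (\<forall>X. set_name P X \<longrightarrow>
        (\<forall>p\<in>P. \<exists>q\<in>P. q \<subseteq> p \<and>
           (\<exists>u\<in>U. (\<forall>n\<in>u. q \<in> X n) \<or>
                   (\<forall>n\<in>u. \<forall>r\<in>P. r \<subseteq> q \<longrightarrow> r \<notin> X n))))"

end

theory Submission
  imports Defs
begin

text \<open>A fusion argument gives \<open>q \<le> p\<close> and a strictly
  increasing \<open>ll\<close> such that \<open>q\<^bsup>[\<eta>]\<^esup>\<close> decides \<open>m \<in> X\<close> whenever \<open>|\<eta>| \<ge> ll m\<close>. So each branch \<open>x\<close>
  of \<open>q\<close> colours \<open>m\<close> by whether \<open>q\<^bsup>[x\<restriction>ll m]\<^esup>\<close> forces \<open>m \<in> X\<close>. Either every node lies on a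
  branch whose set of true colours is in \<open>U\<close>, or above some node \<open>\<sigma>\<close> every node lies on a branch
  whose set of false colours is in \<open>U\<close>; this gives a colour \<open>c\<close> and, for every node \<open>\<nu>\<close> above
  \<open>\<sigma>\<close>, a witness branch whose agreement set (where the colour is \<open>c\<close>) is in \<open>U\<close>. Let \<open>A\<^sub>n\<close> be
  the intersection of the finitely many agreement sets of nodes of length at most \<open>n\<close>; the
  P-point property gives \<open>W \<in> U\<close> almost contained in every \<open>A\<^sub>n\<close>.

  Now cut \<open>\<omega>\<close> into blocks; as \<open>U\<close> is nonprincipal, the union of the blocks with even or with
  odd index is in \<open>U\<close>, and infinitely many blocks are left out. The final condition follows
  canonical witness branches and splits only at levels reserved for the blocks left out. If
  \<open>m \<in> W\<close> lies in a chosen block, no splitting happens between a level \<open>n\<close> fixed before the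
  block and \<open>ll m\<close>, so every node of length \<open>ll m\<close> follows one witness branch of a node of
  length at most \<open>n\<close>, and the blocks are long enough that \<open>m \<in> A\<^sub>n\<close>. Hence the condition forces
  \<open>m \<in> X\<close> for all these \<open>m\<close> (if \<open>c\<close> holds) or \<open>m \<notin> X\<close> for all of them. A principal \<open>U\<close> is
  handled by deciding its single point.\<close>

section \<open>Conditions of \<open>PT\<^sub>H\<close>\<close>

abbreviation is_prefix :: "'a list \<Rightarrow> 'a list \<Rightarrow> bool" where
  "is_prefix \<eta> \<nu> \<equiv> take (length \<eta>) \<nu> = \<eta>"

definition comparable :: "'a list \<Rightarrow> 'a list \<Rightarrow> bool" where
  "comparable \<nu> \<eta> \<longleftrightarrow> is_prefix \<nu> \<eta> \<or> is_prefix \<eta> \<nu>"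

lemma is_prefix_length_le: "is_prefix \<eta> \<nu> \<Longrightarrow> length \<eta> \<le> length \<nu>"
  by (metis length_take min.absorb_iff2)

lemma is_prefix_trans: "is_prefix \<eta> \<nu> \<Longrightarrow> is_prefix \<nu> \<rho> \<Longrightarrow> is_prefix \<eta> \<rho>"
  by (metis length_take take_take)

lemma is_prefix_take: "is_prefix \<eta> \<nu> \<Longrightarrow> is_prefix (take k \<eta>) \<nu>"
  by (metis length_take min.commute take_take)

lemma comparable_le: "comparable \<nu> \<eta> \<Longrightarrow> length \<nu> \<le> length \<eta> \<Longrightarrow> is_prefix \<nu> \<eta>"
  unfolding comparable_def by auto

lemma comparable_ge: "comparable \<nu> \<eta> \<Longrightarrow> length \<eta> \<le> length \<nu> \<Longrightarrow> is_prefix \<eta> \<nu>"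
  unfolding comparable_def by auto

lemma comparable_sym: "comparable \<nu> \<eta> \<longleftrightarrow> comparable \<eta> \<nu>"
  unfolding comparable_def by blast

lemma comparable_take: "comparable \<nu> \<eta> \<Longrightarrow> comparable (take k \<nu>) \<eta>"
proof (cases "is_prefix \<nu> \<eta>")
  case True
  then show ?thesis
    using is_prefix_take comparable_def by blast
next
  case False
  moreover assume "comparable \<nu> \<eta>"
  ultimately have \<eta>\<nu>: "is_prefix \<eta> \<nu>"
    unfolding comparable_def by blast
  show ?thesis
  proof (cases "k \<le> length \<eta>")
    case True
    then have "take k \<nu> = take k \<eta>"
      by (metis \<eta>\<nu> min.absorb1 take_take)
    then show ?thesis
      using True by (simp add: comparable_def min.absorb1)
  next
    case False
    then show ?thesis
      by (metis \<eta>\<nu> comparable_def nat_le_linear min.absorb1 take_take)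
  qed
qed

lemma comparable_take_right: "comparable \<nu> \<eta> \<Longrightarrow> comparable \<nu> (take k \<eta>)"
  using comparable_take comparable_sym by blast

definition splitting :: "(nat \<Rightarrow> 'a set) \<Rightarrow> 'a list set \<Rightarrow> 'a list \<Rightarrow> bool" where
  "splitting H p \<eta> \<longleftrightarrow> succ_of p \<eta> = H (length \<eta>)"

lemma mem_succ_of_iff [simp]: "i \<in> succ_of p \<eta> \<longleftrightarrow> \<eta> @ [i] \<in> p"
  by (simp add: succ_of_def)

lemma PTI:
  assumes "p \<noteq> {}" and "\<And>\<eta> k. \<eta> \<in> p \<Longrightarrow> take k \<eta> \<in> p"
    and "\<And>\<eta> l. \<eta> \<in> p \<Longrightarrow> l < length \<eta> \<Longrightarrow> \<eta> ! l \<in> H l"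
    and "\<And>\<eta>. \<eta> \<in> p \<Longrightarrow> (\<exists>i. succ_of p \<eta> = {i}) \<or> splitting H p \<eta>"
    and "\<And>\<eta>. \<eta> \<in> p \<Longrightarrow> \<exists>\<nu>\<in>p. is_prefix \<eta> \<nu> \<and> splitting H p \<nu>"
  shows "p \<in> PT H"
  using assms unfolding PT_def splitting_def by blast

lemma PT_take: "p \<in> PT H \<Longrightarrow> \<eta> \<in> p \<Longrightarrow> take k \<eta> \<in> p"
  unfolding PT_def by blast

lemma PT_nth: "p \<in> PT H \<Longrightarrow> \<eta> \<in> p \<Longrightarrow> l < length \<eta> \<Longrightarrow> \<eta> ! l \<in> H l"
  unfolding PT_def by blast

lemma PT_succ_cases:
  "p \<in> PT H \<Longrightarrow> \<eta> \<in> p \<Longrightarrow> (\<exists>i. succ_of p \<eta> = {i}) \<or> splitting H p \<eta>"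
  unfolding PT_def splitting_def by blast

lemma PT_splitting_extension:
  "p \<in> PT H \<Longrightarrow> \<eta> \<in> p \<Longrightarrow> \<exists>\<nu>\<in>p. is_prefix \<eta> \<nu> \<and> splitting H p \<nu>"
  unfolding PT_def splitting_def by blast

lemma PT_Nil: "p \<in> PT H \<Longrightarrow> [] \<in> p"
proof -
  assume p: "p \<in> PT H"
  then obtain \<eta> where "\<eta> \<in> p"
    unfolding PT_def by blast
  from PT_take[OF p this, of 0] show ?thesis by simp
qed

lemma PT_succ_nonempty:
  assumes "p \<in> PT H" "\<And>n. H n \<noteq> {}" "\<eta> \<in> p"
  shows "\<exists>i. \<eta> @ [i] \<in> p"
proof -
  have "succ_of p \<eta> \<noteq> {}"
    using PT_succ_cases[OF assms(1,3)] assms(2) unfolding splitting_def by auto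
  then show ?thesis by auto
qed

lemma extend_to_length:
  assumes "\<And>\<eta>. \<eta> \<in> p \<Longrightarrow> \<exists>i. \<eta> @ [i] \<in> p" "\<eta> \<in> p" "length \<eta> \<le> n"
  shows "\<exists>\<nu>\<in>p. length \<nu> = n \<and> is_prefix \<eta> \<nu>"
  using assms(3)
proof (induction n)
  case 0
  then show ?case using assms(2) by auto
next
  case (Suc n)
  show ?case
  proof (cases "length \<eta> = Suc n")
    case False
    then obtain \<nu> where "\<nu> \<in> p" "length \<nu> = n" "is_prefix \<eta> \<nu>"
      using Suc by auto
    moreover obtain i where "\<nu> @ [i] \<in> p"
      using assms(1) calculation(1) by blast
    ultimately show ?thesis
      using False Suc.prems by (intro bexI[of _ "\<nu> @ [i]"]) auto
  qed (use assms(2) in auto)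
qed

lemma PT_extend_to_length:
  "p \<in> PT H \<Longrightarrow> (\<And>n. H n \<noteq> {}) \<Longrightarrow> \<eta> \<in> p \<Longrightarrow> length \<eta> \<le> n \<Longrightarrow>
    \<exists>\<nu>\<in>p. length \<nu> = n \<and> is_prefix \<eta> \<nu>"
  using extend_to_length[of p] PT_succ_nonempty by blast

lemma PT_level_nonempty: "p \<in> PT H \<Longrightarrow> (\<And>n. H n \<noteq> {}) \<Longrightarrow> \<exists>\<nu>\<in>p. length \<nu> = n"
  using PT_extend_to_length[of p H "[]" n] PT_Nil by auto

lemma PT_finite_up_to_level:
  assumes "p \<in> PT H" "\<And>n. finite (H n)"
  shows "finite {\<nu>\<in>p. length \<nu> \<le> n}"
proof (rule finite_subset)
  show "{\<nu>\<in>p. length \<nu> \<le> n} \<subseteq> {xs. set xs \<subseteq> (\<Union>l<n. H l) \<and> length xs \<le> n}"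
    using PT_nth[OF assms(1)] by (fastforce simp: in_set_conv_nth)
  show "finite {xs. set xs \<subseteq> (\<Union>l<n. H l) \<and> length xs \<le> n}"
    by (rule finite_lists_length_le) (simp add: assms(2))
qed

definition subtree :: "'a list set \<Rightarrow> 'a list \<Rightarrow> 'a list set" where
  "subtree p \<eta> = {\<nu> \<in> p. comparable \<nu> \<eta>}"

lemma subtree_subset: "subtree p \<eta> \<subseteq> p"
  by (auto simp: subtree_def)

lemma subtree_mono: "r \<subseteq> q \<Longrightarrow> subtree r \<eta> \<subseteq> subtree q \<eta>"
  by (auto simp: subtree_def)

lemma subtree_self: "\<eta> \<in> p \<Longrightarrow> \<eta> \<in> subtree p \<eta>"
  by (auto simp: subtree_def comparable_def)

lemma subtree_take_subset: "subtree q \<eta> \<subseteq> subtree q (take k \<eta>)"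
  by (auto simp: subtree_def comparable_take_right)

lemma succ_of_subtree_above:
  assumes "is_prefix \<eta> \<nu>"
  shows "succ_of (subtree p \<eta>) \<nu> = succ_of p \<nu>"
proof -
  have "is_prefix \<eta> (\<nu> @ [i])" for i
    using assms is_prefix_length_le by fastforce
  then show ?thesis
    by (auto simp: succ_of_def subtree_def comparable_def)
qed

lemma succ_of_subtree_below:
  assumes "p \<in> PT H" "\<eta> \<in> p" "length \<nu> < length \<eta>" "is_prefix \<nu> \<eta>"
  shows "succ_of (subtree p \<eta>) \<nu> = {\<eta> ! length \<nu>}"
proof -
  have next_node: "take (Suc (length \<nu>)) \<eta> = \<nu> @ [\<eta> ! length \<nu>]"
    using assms(3,4) by (metis take_Suc_conv_app_nth)
  then have "\<nu> @ [\<eta> ! length \<nu>] \<in> p"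
    using PT_take[OF assms(1,2)] by metis
  moreover have "comparable (\<nu> @ [i]) \<eta> \<longleftrightarrow> i = \<eta> ! length \<nu>" for i
  proof -
    have "comparable (\<nu> @ [i]) \<eta> \<longleftrightarrow> is_prefix (\<nu> @ [i]) \<eta>"
      using assms(3) comparable_le[of "\<nu> @ [i]" \<eta>] by (auto simp: comparable_def)
    then show ?thesis
      using next_node by auto
  qed
  ultimately show ?thesis
    unfolding subtree_def succ_of_def by blast
qed

lemma subtree_splitting_extension:
  assumes "p \<in> PT H" "\<eta> \<in> p" "\<nu> \<in> subtree p \<eta>"
  shows "\<exists>\<nu>'\<in>subtree p \<eta>. is_prefix \<nu> \<nu>' \<and> splitting H (subtree p \<eta>) \<nu>'"
proof -
  have \<nu>: "\<nu> \<in> p" "comparable \<nu> \<eta>"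
    using assms(3) by (auto simp: subtree_def)
  define \<rho> where "\<rho> = (if length \<nu> \<le> length \<eta> then \<eta> else \<nu>)"
  have \<rho>: "\<rho> \<in> p" "is_prefix \<nu> \<rho>" "is_prefix \<eta> \<rho>"
    using assms(2) \<nu> comparable_le[OF \<nu>(2)] comparable_ge[OF \<nu>(2)] by (auto simp: \<rho>_def)
  obtain \<nu>' where \<nu>': "\<nu>' \<in> p" "is_prefix \<rho> \<nu>'" "splitting H p \<nu>'"
    using PT_splitting_extension[OF assms(1) \<rho>(1)] by blast
  have "is_prefix \<eta> \<nu>'" "is_prefix \<nu> \<nu>'"
    using \<rho> \<nu>'(2) is_prefix_trans by blast+
  moreover from this have "\<nu>' \<in> subtree p \<eta>"
    using \<nu>'(1) by (simp add: subtree_def comparable_def)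
  ultimately show ?thesis
    using \<nu>'(3) succ_of_subtree_above by (metis splitting_def)
qed

lemma subtree_PT:
  assumes "p \<in> PT H" "\<eta> \<in> p"
  shows "subtree p \<eta> \<in> PT H"
proof (rule PTI)
  show "subtree p \<eta> \<noteq> {}"
    using subtree_self[OF assms(2)] by blast
next
  fix \<nu> k
  assume "\<nu> \<in> subtree p \<eta>"
  then show "take k \<nu> \<in> subtree p \<eta>"
    using PT_take[OF assms(1)] comparable_take by (auto simp: subtree_def)
next
  fix \<nu> l
  assume "\<nu> \<in> subtree p \<eta>" "l < length \<nu>"
  then show "\<nu> ! l \<in> H l"
    using PT_nth[OF assms(1)] subtree_subset by blast
next
  fix \<nu>
  assume "\<nu> \<in> subtree p \<eta>"
  then have \<nu>: "\<nu> \<in> p" "comparable \<nu> \<eta>"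
    by (auto simp: subtree_def)
  show "(\<exists>i. succ_of (subtree p \<eta>) \<nu> = {i}) \<or> splitting H (subtree p \<eta>) \<nu>"
  proof (cases "length \<nu> < length \<eta>")
    case True
    then show ?thesis
      using succ_of_subtree_below[OF assms True] comparable_le[OF \<nu>(2)] by auto
  next
    case False
    then have "succ_of (subtree p \<eta>) \<nu> = succ_of p \<nu>"
      using succ_of_subtree_above comparable_ge[OF \<nu>(2)] by simp
    then show ?thesis
      using PT_succ_cases[OF assms(1) \<nu>(1)] by (simp add: splitting_def)
  qed
qed (rule subtree_splitting_extension[OF assms])

section \<open>Amalgamation and fusion\<close>

definition amalgam :: "'a list set \<Rightarrow> nat \<Rightarrow> ('a list \<Rightarrow> 'a list set) \<Rightarrow> 'a list set" where
  "amalgam q L R = {\<nu> \<in> q. length \<nu> \<le> L} \<union> (\<Union>\<eta>\<in>{\<eta>\<in>q. length \<eta> = L}. R \<eta>)"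

locale amalgamation =
  fixes H :: "nat \<Rightarrow> 'a set" and q :: "'a list set" and L :: nat and R :: "'a list \<Rightarrow> 'a list set"
  assumes H_nonempty: "\<And>n. H n \<noteq> {}"
    and q_PT: "q \<in> PT H"
    and R_PT: "\<And>\<eta>. \<eta> \<in> q \<Longrightarrow> length \<eta> = L \<Longrightarrow> R \<eta> \<in> PT H"
    and R_subset: "\<And>\<eta>. \<eta> \<in> q \<Longrightarrow> length \<eta> = L \<Longrightarrow> R \<eta> \<subseteq> subtree q \<eta>"
begin

lemma mem_R_self:
  assumes "\<eta> \<in> q" "length \<eta> = L"
  shows "\<eta> \<in> R \<eta>"
proof -
  obtain \<nu> where \<nu>: "\<nu> \<in> R \<eta>" "length \<nu> = L"
    using PT_level_nonempty[OF R_PT[OF assms] H_nonempty] by blast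
  then have "comparable \<nu> \<eta>"
    using R_subset[OF assms] by (auto simp: subtree_def)
  then have "\<nu> = \<eta>"
    using \<nu>(2) assms(2) comparable_le by fastforce
  then show ?thesis
    using \<nu> by simp
qed

lemma amalgam_subset: "amalgam q L R \<subseteq> q"
  unfolding amalgam_def using R_subset subtree_subset by blast

lemma mem_amalgam_below: "length \<nu> \<le> L \<Longrightarrow> \<nu> \<in> amalgam q L R \<longleftrightarrow> \<nu> \<in> q"
  using amalgam_subset unfolding amalgam_def by blast

lemma mem_amalgam_above:
  assumes "L \<le> length \<nu>"
  shows "\<nu> \<in> amalgam q L R \<longleftrightarrow> take L \<nu> \<in> q \<and> \<nu> \<in> R (take L \<nu>)"
proof
  assume "\<nu> \<in> amalgam q L R"
  then consider "\<nu> \<in> q" "length \<nu> = L"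
    | \<eta> where "\<eta> \<in> q" "length \<eta> = L" "\<nu> \<in> R \<eta>"
    using assms unfolding amalgam_def by fastforce
  then show "take L \<nu> \<in> q \<and> \<nu> \<in> R (take L \<nu>)"
  proof cases
    case 1
    then show ?thesis
      using mem_R_self by simp
  next
    case 2
    then have "take L \<nu> = \<eta>"
      using R_subset assms comparable_ge unfolding subtree_def by blast
    then show ?thesis
      using 2 by simp
  qed
next
  assume "take L \<nu> \<in> q \<and> \<nu> \<in> R (take L \<nu>)"
  then show "\<nu> \<in> amalgam q L R"
    using assms unfolding amalgam_def by (intro UnI2) (auto intro!: bexI[of _ "take L \<nu>"])
qed

lemma succ_of_amalgam_below:
  "length \<nu> < L \<Longrightarrow> succ_of (amalgam q L R) \<nu> = succ_of q \<nu>"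
  using mem_amalgam_below by (auto simp: succ_of_def)

lemma succ_of_amalgam_above:
  assumes "L \<le> length \<nu>" "\<nu> \<in> amalgam q L R"
  shows "succ_of (amalgam q L R) \<nu> = succ_of (R (take L \<nu>)) \<nu>"
  using assms mem_amalgam_above[of \<nu>] mem_amalgam_above[of "\<nu> @ [_]"]
  by (auto simp: succ_of_def)

lemma amalgam_splitting_extension_above:
  assumes "\<nu> \<in> amalgam q L R" "L \<le> length \<nu>"
  shows "\<exists>\<nu>'\<in>amalgam q L R. is_prefix \<nu> \<nu>' \<and> splitting H (amalgam q L R) \<nu>'"
proof -
  have \<nu>: "take L \<nu> \<in> q" "\<nu> \<in> R (take L \<nu>)"
    using mem_amalgam_above assms by blast+
  then have "R (take L \<nu>) \<in> PT H"
    using R_PT assms(2) by simp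
  then obtain \<nu>' where \<nu>': "\<nu>' \<in> R (take L \<nu>)" "is_prefix \<nu> \<nu>'" "splitting H (R (take L \<nu>)) \<nu>'"
    using PT_splitting_extension \<nu>(2) by blast
  have L_le: "L \<le> length \<nu>'"
    using is_prefix_length_le[OF \<nu>'(2)] assms(2) by simp
  have same_stem: "take L \<nu>' = take L \<nu>"
    by (metis \<nu>'(2) assms(2) min.absorb1 take_take)
  have "\<nu>' \<in> amalgam q L R"
    using mem_amalgam_above[OF L_le] same_stem \<nu>'(1) \<nu>(1) by simp
  moreover from this have "splitting H (amalgam q L R) \<nu>'"
    using succ_of_amalgam_above[OF L_le] same_stem \<nu>'(3) by (simp add: splitting_def)
  ultimately show ?thesis
    using \<nu>'(2) by blast
qed

lemma amalgam_splitting_extension: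
  assumes "\<nu> \<in> amalgam q L R"
  shows "\<exists>\<nu>'\<in>amalgam q L R. is_prefix \<nu> \<nu>' \<and> splitting H (amalgam q L R) \<nu>'"
proof (cases "L \<le> length \<nu>")
  case False
  obtain \<eta> where \<eta>: "\<eta> \<in> q" "length \<eta> = L" "is_prefix \<nu> \<eta>"
    using PT_extend_to_length[OF q_PT H_nonempty, of \<nu> L] assms amalgam_subset False by auto
  then have "\<eta> \<in> amalgam q L R"
    using mem_amalgam_below by simp
  then show ?thesis
    using amalgam_splitting_extension_above \<eta> is_prefix_trans by (metis order_refl)
qed (use amalgam_splitting_extension_above assms in blast)

lemma amalgam_take: "\<nu> \<in> amalgam q L R \<Longrightarrow> take k \<nu> \<in> amalgam q L R"
proof (cases "length (take k \<nu>) \<le> L")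
  case True
  assume "\<nu> \<in> amalgam q L R"
  then show ?thesis
    using True mem_amalgam_below amalgam_subset PT_take[OF q_PT] by blast
next
  case False
  then have L: "L \<le> length \<nu>" "L \<le> k"
    by auto
  assume "\<nu> \<in> amalgam q L R"
  then have "take L \<nu> \<in> q" "\<nu> \<in> R (take L \<nu>)"
    using mem_amalgam_above L(1) by blast+
  moreover from this have "take k \<nu> \<in> R (take L \<nu>)"
    using PT_take[OF R_PT] L(1) by simp
  ultimately show ?thesis
    using mem_amalgam_above[of "take k \<nu>"] L by (simp add: min.absorb1)
qed

lemma amalgam_PT: "amalgam q L R \<in> PT H"
proof (rule PTI)
  show "amalgam q L R \<noteq> {}"
    using mem_amalgam_below[of "[]"] PT_Nil[OF q_PT] by auto
next
  fix \<nu> l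
  assume "\<nu> \<in> amalgam q L R" "l < length \<nu>"
  then show "\<nu> ! l \<in> H l"
    using PT_nth[OF q_PT] amalgam_subset by blast
next
  fix \<nu>
  assume \<nu>: "\<nu> \<in> amalgam q L R"
  show "(\<exists>i. succ_of (amalgam q L R) \<nu> = {i}) \<or> splitting H (amalgam q L R) \<nu>"
  proof (cases "length \<nu> < L")
    case True
    then show ?thesis
      using succ_of_amalgam_below PT_succ_cases[OF q_PT] \<nu> amalgam_subset
      by (auto simp: splitting_def)
  next
    case False
    then have "take L \<nu> \<in> q" "\<nu> \<in> R (take L \<nu>)"
      using mem_amalgam_above \<nu> by simp_all
    then show ?thesis
      using succ_of_amalgam_above[OF _ \<nu>] PT_succ_cases[OF R_PT] False
      by (simp add: splitting_def)
  qed
qed (use amalgam_take amalgam_splitting_extension in blast)+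

lemma subtree_amalgam_subset:
  assumes "\<eta> \<in> q" "length \<eta> = L"
  shows "subtree (amalgam q L R) \<eta> \<subseteq> R \<eta>"
proof
  fix \<nu>
  assume "\<nu> \<in> subtree (amalgam q L R) \<eta>"
  then have \<nu>: "\<nu> \<in> amalgam q L R" "comparable \<nu> \<eta>"
    by (auto simp: subtree_def)
  show "\<nu> \<in> R \<eta>"
  proof (cases "L \<le> length \<nu>")
    case True
    then show ?thesis
      using mem_amalgam_above \<nu> comparable_ge assms(2) by metis
  next
    case False
    then have "\<nu> = take (length \<nu>) \<eta>"
      using comparable_le[OF \<nu>(2)] assms(2) by simp
    then show ?thesis
      using PT_take[OF R_PT[OF assms] mem_R_self[OF assms]] by metis
  qed
qed

end

locale fusion_sequence =
  fixes H :: "nat \<Rightarrow> 'a set" and q :: "nat \<Rightarrow> 'a list set" and L :: "nat \<Rightarrow> nat"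
  assumes q_PT: "\<And>m. q m \<in> PT H"
    and q_decreasing: "\<And>m. q (Suc m) \<subseteq> q m"
    and L_strict_mono: "strict_mono L"
    and frozen_below: "\<And>m \<nu>. length \<nu> \<le> L m \<Longrightarrow> \<nu> \<in> q (Suc m) \<longleftrightarrow> \<nu> \<in> q m"
    and splitting_below: "\<And>m \<nu>. \<nu> \<in> q (Suc m) \<Longrightarrow> length \<nu> \<le> L m \<Longrightarrow>
      \<exists>\<nu>'\<in>q (Suc m). is_prefix \<nu> \<nu>' \<and> length \<nu>' < L (Suc m) \<and> splitting H (q (Suc m)) \<nu>'"
begin

lemma q_antimono: "m \<le> m' \<Longrightarrow> q m' \<subseteq> q m"
  by (induction m' rule: dec_induct) (use q_decreasing in auto)

lemma frozen_from:
  assumes "m \<le> m'" "length \<nu> \<le> L m"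
  shows "\<nu> \<in> q m' \<longleftrightarrow> \<nu> \<in> q m"
  using assms(1)
proof (induction m' rule: dec_induct)
  case (step k)
  have "L m \<le> L k"
    using L_strict_mono step.hyps(1) by (simp add: strict_mono_less_eq)
  then show ?case
    using frozen_below[of \<nu> k] assms(2) step.IH by simp
qed simp

lemma mem_Inter_iff:
  assumes "length \<nu> \<le> L m"
  shows "\<nu> \<in> (\<Inter>m. q m) \<longleftrightarrow> \<nu> \<in> q m"
proof
  assume \<nu>: "\<nu> \<in> q m"
  have "\<nu> \<in> q m'" for m'
  proof (cases "m \<le> m'")
    case True
    then show ?thesis
      using frozen_from assms \<nu> by blast
  next
    case False
    then show ?thesis
      using q_antimono[of m' m] \<nu> by auto
  qed
  then show "\<nu> \<in> (\<Inter>m. q m)"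
    by blast
qed blast

lemma succ_of_Inter: "length \<nu> < L m \<Longrightarrow> succ_of (\<Inter>m. q m) \<nu> = succ_of (q m) \<nu>"
  using mem_Inter_iff[of "\<nu> @ [_]" m] by (auto simp: succ_of_def)

lemma Inter_PT: "(\<Inter>m. q m) \<in> PT H"
proof (rule PTI)
  show "(\<Inter>m. q m) \<noteq> {}"
    using PT_Nil[OF q_PT] by blast
next
  fix \<eta> k
  assume "\<eta> \<in> (\<Inter>m. q m)"
  then show "take k \<eta> \<in> (\<Inter>m. q m)"
    using PT_take[OF q_PT] by blast
next
  fix \<eta> l
  assume "\<eta> \<in> (\<Inter>m. q m)" "l < length \<eta>"
  then show "\<eta> ! l \<in> H l"
    using PT_nth[OF q_PT] by blast
next
  fix \<nu>
  assume \<nu>: "\<nu> \<in> (\<Inter>m. q m)"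
  have "length \<nu> < L (Suc (length \<nu>))"
    using strict_mono_imp_increasing[OF L_strict_mono] Suc_le_lessD by blast
  then show "(\<exists>i. succ_of (\<Inter>m. q m) \<nu> = {i}) \<or> splitting H (\<Inter>m. q m) \<nu>"
    using succ_of_Inter PT_succ_cases[OF q_PT] \<nu> by (simp add: splitting_def)
next
  fix \<nu>
  assume \<nu>: "\<nu> \<in> (\<Inter>m. q m)"
  define m where "m = length \<nu>"
  have "length \<nu> \<le> L m"
    using strict_mono_imp_increasing[OF L_strict_mono] m_def by simp
  then obtain \<nu>' where \<nu>': "\<nu>' \<in> q (Suc m)" "is_prefix \<nu> \<nu>'" "length \<nu>' < L (Suc m)"
      "splitting H (q (Suc m)) \<nu>'"
    using splitting_below \<nu> by blast
  then have "\<nu>' \<in> (\<Inter>m. q m)" "splitting H (\<Inter>m. q m) \<nu>'"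
    using mem_Inter_iff[of \<nu>' "Suc m"] succ_of_Inter[of \<nu>' "Suc m"] by (simp_all add: splitting_def)
  then show "\<exists>\<nu>'\<in>(\<Inter>m. q m). is_prefix \<nu> \<nu>' \<and> splitting H (\<Inter>m. q m) \<nu>'"
    using \<nu>'(2) by blast
qed

end

definition decides :: "'a list set set \<Rightarrow> (nat \<Rightarrow> 'a list set set) \<Rightarrow> 'a list set \<Rightarrow> nat \<Rightarrow> bool" where
  "decides P X r m \<longleftrightarrow> r \<in> X m \<or> (\<forall>r'\<in>P. r' \<subseteq> r \<longrightarrow> r' \<notin> X m)"

lemma set_name_open: "set_name P X \<Longrightarrow> r \<in> X m \<Longrightarrow> r' \<in> P \<Longrightarrow> r' \<subseteq> r \<Longrightarrow> r' \<in> X m"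
  unfolding set_name_def by blast

lemma set_name_dense: "set_name P X \<Longrightarrow> r \<in> P \<Longrightarrow> dense_below P (X m) r \<Longrightarrow> r \<in> X m"
  unfolding set_name_def by blast

lemma decides_dense:
  assumes "set_name P X" "r \<in> P"
  shows "\<exists>r'. r' \<in> P \<and> r' \<subseteq> r \<and> decides P X r' m"
proof (cases "r \<in> X m")
  case True
  then show ?thesis
    using assms(2) unfolding decides_def by auto
next
  case False
  then have "\<not> dense_below P (X m) r"
    using set_name_dense[OF assms] by blast
  then obtain r' where "r' \<in> P" "r' \<subseteq> r" "\<forall>r''\<in>X m. \<not> r'' \<subseteq> r'"
    unfolding dense_below_def by blast
  then show ?thesis
    unfolding decides_def by auto
qed

lemma decides_mono:
  assumes "set_name P X" "decides P X r m" "r' \<in> P" "r' \<subseteq> r"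
  shows "decides P X r' m"
  using assms(2) unfolding decides_def
proof
  assume "r \<in> X m"
  then show "r' \<in> X m \<or> (\<forall>r''\<in>P. r'' \<subseteq> r' \<longrightarrow> r'' \<notin> X m)"
    using set_name_open[OF assms(1) _ assms(3,4)] by simp
next
  assume "\<forall>r''\<in>P. r'' \<subseteq> r \<longrightarrow> r'' \<notin> X m"
  then show "r' \<in> X m \<or> (\<forall>r''\<in>P. r'' \<subseteq> r' \<longrightarrow> r'' \<notin> X m)"
    using assms(4) by auto
qed

lemma splitting_level_bound:
  assumes "q \<in> PT H" "\<And>n. finite (H n)"
  shows "\<exists>L'>L. \<forall>\<nu>\<in>q. length \<nu> \<le> L \<longrightarrow>
    (\<exists>\<nu>'\<in>q. is_prefix \<nu> \<nu>' \<and> length \<nu>' < L' \<and> splitting H q \<nu>')"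
proof -
  have "\<forall>\<nu>\<in>q. \<exists>\<nu>'. \<nu>' \<in> q \<and> is_prefix \<nu> \<nu>' \<and> splitting H q \<nu>'"
    using PT_splitting_extension[OF assms(1)] by blast
  then obtain ext where ext: "\<forall>\<nu>\<in>q. ext \<nu> \<in> q \<and> is_prefix \<nu> (ext \<nu>) \<and> splitting H q (ext \<nu>)"
    by (rule bchoice[elim_format]) blast
  have "finite (length ` ext ` {\<nu>\<in>q. length \<nu> \<le> L})"
    using PT_finite_up_to_level[OF assms] by blast
  then obtain b where b: "\<forall>n\<in>length ` ext ` {\<nu>\<in>q. length \<nu> \<le> L}. n < b"
    unfolding finite_nat_set_iff_bounded by blast
  show ?thesis
  proof (intro exI[of _ "max b (Suc L)"] conjI ballI impI)
    fix \<nu>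
    assume "\<nu> \<in> q" "length \<nu> \<le> L"
    then have "length (ext \<nu>) < b"
      using b by blast
    then show "\<exists>\<nu>'\<in>q. is_prefix \<nu> \<nu>' \<and> length \<nu>' < max b (Suc L) \<and> splitting H q \<nu>'"
      using ext \<open>\<nu> \<in> q\<close> by (intro bexI[of _ "ext \<nu>"]) auto
  qed simp
qed

locale fusion_construction =
  fixes H :: "nat \<Rightarrow> 'a set" and X :: "nat \<Rightarrow> 'a list set set" and p :: "'a list set"
  assumes H_finite: "\<And>n. finite (H n)" and H_nonempty: "\<And>n. H n \<noteq> {}"
    and X_name: "set_name (PT H) X" and p_PT: "p \<in> PT H"
begin

definition decide :: "nat \<Rightarrow> 'a list set \<Rightarrow> 'a list set" where
  "decide m r = (SOME r'. r' \<in> PT H \<and> r' \<subseteq> r \<and> decides (PT H) X r' m)"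

lemma decide: "r \<in> PT H \<Longrightarrow> decide m r \<in> PT H \<and> decide m r \<subseteq> r \<and> decides (PT H) X (decide m r) m"
  unfolding decide_def using decides_dense[OF X_name] by (rule someI_ex)

definition next_level :: "'a list set \<Rightarrow> nat \<Rightarrow> nat" where
  "next_level q L = (SOME L'. L < L' \<and> (\<forall>\<nu>\<in>q. length \<nu> \<le> L \<longrightarrow>
      (\<exists>\<nu>'\<in>q. is_prefix \<nu> \<nu>' \<and> length \<nu>' < L' \<and> splitting H q \<nu>')))"

lemma next_level: "q \<in> PT H \<Longrightarrow> L < next_level q L \<and> (\<forall>\<nu>\<in>q. length \<nu> \<le> L \<longrightarrow>
      (\<exists>\<nu>'\<in>q. is_prefix \<nu> \<nu>' \<and> length \<nu>' < next_level q L \<and> splitting H q \<nu>'))"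
  unfolding next_level_def using splitting_level_bound[OF _ H_finite] by (rule someI_ex)

text \<open>Stage \<open>m + 1\<close> shrinks the part of \<open>Q m\<close> above each node of length \<open>Lv m\<close> to a condition
  deciding \<open>m \<in> X\<close>, and then chooses \<open>Lv (m + 1)\<close> beyond splitting extensions of all nodes of
  length at most \<open>Lv m\<close>, so that the intersection of all stages is again a condition.\<close>

primrec stage :: "nat \<Rightarrow> 'a list set \<times> nat" where
  "stage 0 = (p, 0)"
| "stage (Suc m) =
    (let q = amalgam (fst (stage m)) (snd (stage m)) (\<lambda>\<eta>. decide m (subtree (fst (stage m)) \<eta>))
     in (q, next_level q (snd (stage m))))"

abbreviation Q :: "nat \<Rightarrow> 'a list set" where "Q m \<equiv> fst (stage m)"
abbreviation Lv :: "nat \<Rightarrow> nat" where "Lv m \<equiv> snd (stage m)"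

lemma Q_Suc: "Q (Suc m) = amalgam (Q m) (Lv m) (\<lambda>\<eta>. decide m (subtree (Q m) \<eta>))"
  by (simp add: Let_def)

lemma Lv_Suc: "Lv (Suc m) = next_level (Q (Suc m)) (Lv m)"
  by (simp add: Let_def)

declare stage.simps(2) [simp del]

lemma amalgamation_stage:
  "Q m \<in> PT H \<Longrightarrow> amalgamation H (Q m) (Lv m) (\<lambda>\<eta>. decide m (subtree (Q m) \<eta>))"
  by unfold_locales (use H_nonempty decide subtree_PT in blast)+

lemma Q_PT: "Q m \<in> PT H"
proof (induction m)
  case (Suc m)
  then show ?case
    using amalgamation.amalgam_PT[OF amalgamation_stage] Q_Suc by simp
qed (simp add: p_PT)

lemma fusion_sequence: "fusion_sequence H Q Lv"
proof
  show "Q (Suc m) \<subseteq> Q m" for m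
    using amalgamation.amalgam_subset[OF amalgamation_stage[OF Q_PT]] Q_Suc by simp
  show "strict_mono Lv"
    using next_level[OF Q_PT] Lv_Suc by (simp add: strict_mono_Suc_iff)
  show "length \<nu> \<le> Lv m \<Longrightarrow> \<nu> \<in> Q (Suc m) \<longleftrightarrow> \<nu> \<in> Q m" for m \<nu>
    using amalgamation.mem_amalgam_below[OF amalgamation_stage[OF Q_PT]] Q_Suc by simp
  show "\<nu> \<in> Q (Suc m) \<Longrightarrow> length \<nu> \<le> Lv m \<Longrightarrow>
      \<exists>\<nu>'\<in>Q (Suc m). is_prefix \<nu> \<nu>' \<and> length \<nu>' < Lv (Suc m) \<and> splitting H (Q (Suc m)) \<nu>'" for m \<nu>
    using next_level[OF Q_PT[of "Suc m"], of "Lv m"] Lv_Suc by simp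
qed (rule Q_PT)

lemma Inter_decides:
  assumes "\<eta> \<in> (\<Inter>m. Q m)" "Lv m \<le> length \<eta>"
  shows "decides (PT H) X (subtree (\<Inter>m. Q m) \<eta>) m"
proof -
  interpret amalgamation H "Q m" "Lv m" "\<lambda>\<eta>. decide m (subtree (Q m) \<eta>)"
    using amalgamation_stage[OF Q_PT] .
  define \<eta>' where "\<eta>' = take (Lv m) \<eta>"
  have \<eta>': "\<eta>' \<in> Q m" "length \<eta>' = Lv m"
    using PT_take[OF Q_PT] assms \<eta>'_def by auto
  have "subtree (\<Inter>m. Q m) \<eta> \<subseteq> subtree (Q (Suc m)) \<eta>"
    using subtree_mono by blast
  also have "\<dots> \<subseteq> subtree (Q (Suc m)) \<eta>'"
    using subtree_take_subset \<eta>'_def by blast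
  also have "\<dots> \<subseteq> decide m (subtree (Q m) \<eta>')"
    using subtree_amalgam_subset[OF \<eta>'] Q_Suc by simp
  finally have "subtree (\<Inter>m. Q m) \<eta> \<subseteq> decide m (subtree (Q m) \<eta>')" .
  moreover have "decides (PT H) X (decide m (subtree (Q m) \<eta>')) m"
    using decide[OF subtree_PT[OF Q_PT \<eta>'(1)]] by blast
  moreover have "subtree (\<Inter>m. Q m) \<eta> \<in> PT H"
    using subtree_PT[OF fusion_sequence.Inter_PT[OF fusion_sequence] assms(1)] .
  ultimately show ?thesis
    using decides_mono[OF X_name] by blast
qed

end

theorem fusion:
  assumes "\<And>n. finite (H n)" "\<And>n. H n \<noteq> {}" "set_name (PT H) X" "p \<in> PT H"
  obtains q ll where "q \<in> PT H" "q \<subseteq> p" "strict_mono ll"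
    "\<And>m \<eta>. \<eta> \<in> q \<Longrightarrow> ll m \<le> length \<eta> \<Longrightarrow> decides (PT H) X (subtree q \<eta>) m"
proof -
  interpret fusion_construction H X p
    using assms by unfold_locales
  interpret fusion_sequence H Q Lv
    by (rule fusion_sequence)
  have "(\<Inter>m. Q m) \<subseteq> p"
    using INT_lower[of 0 UNIV Q] by simp
  then show ?thesis
    using that[OF Inter_PT _ L_strict_mono Inter_decides] by blast
qed

section \<open>Branches\<close>

definition init_seg :: "(nat \<Rightarrow> 'a) \<Rightarrow> nat \<Rightarrow> 'a list" where
  "init_seg x k = map x [0..<k]"

definition is_branch :: "'a list set \<Rightarrow> (nat \<Rightarrow> 'a) \<Rightarrow> bool" where
  "is_branch p x \<longleftrightarrow> (\<forall>k. init_seg x k \<in> p)"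

lemma length_init_seg [simp]: "length (init_seg x n) = n"
  by (simp add: init_seg_def)

lemma nth_init_seg [simp]: "i < n \<Longrightarrow> init_seg x n ! i = x i"
  by (simp add: init_seg_def)

lemma init_seg_Suc: "init_seg x (Suc n) = init_seg x n @ [x n]"
  by (simp add: init_seg_def)

lemma take_init_seg: "k \<le> n \<Longrightarrow> take k (init_seg x n) = init_seg x k"
  by (simp add: init_seg_def take_map)

primrec greedy_extension :: "'a list set \<Rightarrow> 'a list \<Rightarrow> nat \<Rightarrow> 'a list" where
  "greedy_extension q \<eta> 0 = \<eta>"
| "greedy_extension q \<eta> (Suc k) =
    greedy_extension q \<eta> k @ [SOME i. greedy_extension q \<eta> k @ [i] \<in> q]"

lemma length_greedy_extension [simp]: "length (greedy_extension q \<eta> k) = length \<eta> + k"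
  by (induction k) auto

lemma greedy_extension_mem:
  assumes "q \<in> PT H" "\<And>n. H n \<noteq> {}" "\<eta> \<in> q"
  shows "greedy_extension q \<eta> k \<in> q"
proof (induction k)
  case (Suc k)
  then have "\<exists>i. greedy_extension q \<eta> k @ [i] \<in> q"
    using PT_succ_nonempty[OF assms(1,2)] by blast
  then show ?case
    by simp (rule someI_ex)
qed (simp add: assms(3))

lemma take_greedy_extension:
  "take (length \<eta> + k) (greedy_extension q \<eta> (k + d)) = greedy_extension q \<eta> k"
  by (induction d) simp_all

lemma branch_through:
  assumes "q \<in> PT H" "\<And>n. H n \<noteq> {}" "\<eta> \<in> q"
  shows "\<exists>x. is_branch q x \<and> init_seg x (length \<eta>) = \<eta>"
proof -
  define x where "x n = greedy_extension q \<eta> (Suc n) ! n" for n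
  have x: "init_seg x n = take n (greedy_extension q \<eta> n)" for n
  proof (rule nth_equalityI)
    fix i
    assume "i < length (init_seg x n)"
    then have "Suc i + (n - Suc i) = n"
      by simp
    then have "greedy_extension q \<eta> (Suc i) = take (length \<eta> + Suc i) (greedy_extension q \<eta> n)"
      by (metis take_greedy_extension)
    then show "init_seg x n ! i = take n (greedy_extension q \<eta> n) ! i"
      using \<open>i < length (init_seg x n)\<close> by (simp add: x_def)
  qed simp
  have "is_branch q x"
    unfolding is_branch_def x using PT_take[OF assms(1) greedy_extension_mem[OF assms]] by blast
  moreover have "init_seg x (length \<eta>) = \<eta>"
    using x[of "length \<eta>"] take_greedy_extension[of \<eta> 0 q "length \<eta>"] by simp
  ultimately show ?thesis
    by blast
qed

text \<open>If no node of the branch above level \<open>L\<close> were splitting, the branch would be the only path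
  of \<open>q\<close> through \<open>init_seg x L\<close>, contradicting clause (D) of the definition of \<open>PT\<close>.\<close>

lemma branch_splitting_above:
  assumes "q \<in> PT H" "is_branch q x"
  shows "\<exists>k\<ge>L. splitting H q (init_seg x k)"
proof (rule ccontr)
  assume no_split: "\<not> (\<exists>k\<ge>L. splitting H q (init_seg x k))"
  have on_branch: "\<nu> = init_seg x (L + d)"
    if "\<nu> \<in> q" "length \<nu> = L + d" "take L \<nu> = init_seg x L" for \<nu> d
    using that
  proof (induction d arbitrary: \<nu>)
    case (Suc d)
    define \<nu>' where "\<nu>' = take (L + d) \<nu>"
    have \<nu>'_eq: "\<nu>' = init_seg x (L + d)"
      using Suc.IH[of \<nu>'] Suc.prems PT_take[OF assms(1)] by (simp add: \<nu>'_def min.absorb1)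
    have \<nu>_eq: "\<nu> = \<nu>' @ [\<nu> ! (L + d)]"
      using Suc.prems(2) unfolding \<nu>'_def by (metis lessI take_Suc_conv_app_nth take_all order_refl add_Suc_right)
    obtain i where "succ_of q (init_seg x (L + d)) = {i}"
      using PT_succ_cases[OF assms(1)] assms(2) no_split unfolding is_branch_def by fastforce
    moreover have "x (L + d) \<in> succ_of q (init_seg x (L + d))"
      using assms(2) unfolding is_branch_def by (simp add: init_seg_Suc[symmetric])
    moreover have "\<nu> ! (L + d) \<in> succ_of q (init_seg x (L + d))"
      using Suc.prems(1) \<nu>_eq \<nu>'_eq by (metis mem_succ_of_iff)
    ultimately show ?case
      using \<nu>_eq \<nu>'_eq by (simp add: init_seg_Suc)
  qed simp
  have "init_seg x L \<in> q"
    using assms(2) unfolding is_branch_def by blast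
  then obtain \<nu> where \<nu>: "\<nu> \<in> q" "is_prefix (init_seg x L) \<nu>" "splitting H q \<nu>"
    using PT_splitting_extension[OF assms(1)] by blast
  then have "L \<le> length \<nu>"
    using is_prefix_length_le by fastforce
  then have "\<nu> = init_seg x (length \<nu>)"
    using on_branch[of \<nu> "length \<nu> - L"] \<nu> by simp
  then show False
    using no_split \<nu>(3) \<open>L \<le> length \<nu>\<close> by metis
qed

section \<open>Ultrafilters\<close>

lemma ultrafilter_Int: "ultrafilter_on_nat U \<Longrightarrow> A \<in> U \<Longrightarrow> B \<in> U \<Longrightarrow> A \<inter> B \<in> U"
  unfolding ultrafilter_on_nat_def by blast

lemma ultrafilter_mono: "ultrafilter_on_nat U \<Longrightarrow> A \<in> U \<Longrightarrow> A \<subseteq> B \<Longrightarrow> B \<in> U"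
  unfolding ultrafilter_on_nat_def by blast

lemma ultrafilter_empty: "ultrafilter_on_nat U \<Longrightarrow> {} \<notin> U"
  unfolding ultrafilter_on_nat_def by blast

lemma ultrafilter_Compl: "ultrafilter_on_nat U \<Longrightarrow> A \<notin> U \<Longrightarrow> - A \<in> U"
  unfolding ultrafilter_on_nat_def by blast

lemma ultrafilter_Un:
  assumes "ultrafilter_on_nat U" "A \<union> B \<in> U"
  shows "A \<in> U \<or> B \<in> U"
proof (rule ccontr)
  assume "\<not> (A \<in> U \<or> B \<in> U)"
  then have "(A \<union> B) \<inter> (- A \<inter> - B) \<in> U"
    using assms ultrafilter_Compl ultrafilter_Int by metis
  then show False
    using ultrafilter_empty[OF assms(1)] by (simp add: Int_Un_distrib2 inf_commute)
qed

lemma ultrafilter_finite_Inter: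
  assumes "ultrafilter_on_nat U" "finite S" "\<And>x. x \<in> S \<Longrightarrow> A x \<in> U"
  shows "(\<Inter>x\<in>S. A x) \<in> U"
  using assms(2,3)
proof (induction S rule: finite_induct)
  case empty
  then show ?case
    using assms(1) unfolding ultrafilter_on_nat_def by simp
qed (simp add: ultrafilter_Int[OF assms(1)])

lemma nonprincipal_ultrafilter_cofinite:
  assumes "ultrafilter_on_nat U" "\<And>k. {k} \<notin> U" "finite F"
  shows "- F \<in> U"
  using assms(3)
proof (induction F rule: finite_induct)
  case empty
  then show ?case
    using assms(1) unfolding ultrafilter_on_nat_def by simp
next
  case (insert a F)
  have "- {a} \<in> U"
    using ultrafilter_Compl[OF assms(1,2)] .
  moreover have "- insert a F = - F \<inter> - {a}"
    by blast
  ultimately show ?case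
    using ultrafilter_Int[OF assms(1) insert.IH] by simp
qed

lemma strict_mono_block:
  fixes b :: "nat \<Rightarrow> nat"
  assumes "strict_mono b" "b 0 \<le> m"
  shows "\<exists>j. b j \<le> m \<and> m < b (Suc j)"
proof -
  have "\<exists>j. m < b j"
    using strict_mono_imp_increasing[OF assms(1), of "Suc m"] Suc_le_lessD by blast
  define j where "j = (LEAST j. m < b j)"
  have "m < b j"
    unfolding j_def using \<open>\<exists>j. m < b j\<close> by (rule LeastI_ex)
  moreover have "j \<noteq> 0"
    using assms(2) \<open>m < b j\<close> by (metis not_less)
  then obtain i where "j = Suc i"
    using not0_implies_Suc by blast
  moreover have "\<not> m < b i"
    using not_less_Least[of i "\<lambda>j. m < b j"] \<open>j = Suc i\<close> j_def by simp
  ultimately show ?thesis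
    by (intro exI[of _ i]) simp
qed

text \<open>Take for \<open>J\<close> the even or the odd indices, whichever gives a union in \<open>U\<close>.\<close>

lemma ultrafilter_sparse_blocks:
  fixes b :: "nat \<Rightarrow> nat"
  assumes "ultrafilter_on_nat U" "\<And>k. {k} \<notin> U" "strict_mono b"
  shows "\<exists>J. (\<forall>n. \<exists>j\<ge>n. j \<notin> J) \<and> {m. \<exists>j\<in>J. b j \<le> m \<and> m < b (Suc j)} \<in> U"
proof -
  define blocks where "blocks J = {m. \<exists>j\<in>J. b j \<le> m \<and> m < b (Suc j)}" for J
  have "- {..<b 0} \<in> U"
    using nonprincipal_ultrafilter_cofinite[OF assms(1,2)] by blast
  moreover have "- {..<b 0} \<subseteq> blocks {j. even j} \<union> blocks {j. odd j}"
  proof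
    fix m
    assume "m \<in> - {..<b 0}"
    then have "b 0 \<le> m"
      by simp
    then obtain j where "b j \<le> m" "m < b (Suc j)"
      using strict_mono_block[OF assms(3)] by blast
    then show "m \<in> blocks {j. even j} \<union> blocks {j. odd j}"
      unfolding blocks_def by blast
  qed
  ultimately consider "blocks {j. even j} \<in> U" | "blocks {j. odd j} \<in> U"
    using ultrafilter_Un[OF assms(1)] ultrafilter_mono[OF assms(1)] by blast
  then show ?thesis
  proof cases
    case 1
    have "\<exists>j\<ge>n. j \<notin> {j. even j}" for n :: nat
      by (intro exI[of _ "Suc (2 * n)"]) simp
    with 1 show ?thesis
      unfolding blocks_def by blast
  next
    case 2
    have "\<exists>j\<ge>n. j \<notin> {j. odd j}" for n :: nat
      by (intro exI[of _ "2 * n"]) simp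
    with 2 show ?thesis
      unfolding blocks_def by blast
  qed
qed

text \<open>Either every node lies on a branch \<open>x\<close> with \<open>{m. Z x m} \<in> U\<close> (take \<open>\<sigma> = []\<close>), or some node \<open>\<sigma>\<close>
  lies on no such branch; then, \<open>U\<close> being an ultrafilter, every branch through \<open>\<sigma>\<close> has
  \<open>{m. \<not> Z x m} \<in> U\<close>.\<close>

lemma homogeneous_node:
  fixes Z :: "(nat \<Rightarrow> 'a) \<Rightarrow> nat \<Rightarrow> bool"
  assumes "q \<in> PT H" "\<And>n. H n \<noteq> {}" "ultrafilter_on_nat U"
  obtains \<sigma> c where "\<sigma> \<in> q"
    "\<And>\<nu>. \<nu> \<in> q \<Longrightarrow> is_prefix \<sigma> \<nu> \<Longrightarrow>
      \<exists>x. is_branch q x \<and> init_seg x (length \<nu>) = \<nu> \<and> {m. Z x m = c} \<in> U"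
proof (cases "\<forall>\<nu>\<in>q. \<exists>x. is_branch q x \<and> init_seg x (length \<nu>) = \<nu> \<and> {m. Z x m} \<in> U")
  case True
  then show ?thesis
    using that[of "[]" True] PT_Nil[OF assms(1)] by auto
next
  case False
  then obtain \<sigma> where \<sigma>: "\<sigma> \<in> q"
    "\<And>x. is_branch q x \<Longrightarrow> init_seg x (length \<sigma>) = \<sigma> \<Longrightarrow> {m. Z x m} \<notin> U"
    by blast
  show ?thesis
  proof (rule that[of \<sigma> False])
    fix \<nu>
    assume \<nu>: "\<nu> \<in> q" "is_prefix \<sigma> \<nu>"
    obtain x where x: "is_branch q x" "init_seg x (length \<nu>) = \<nu>"
      using branch_through[OF assms(1,2) \<nu>(1)] by blast
    then have "init_seg x (length \<sigma>) = \<sigma>"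
      using \<nu>(2) is_prefix_length_le take_init_seg by metis
    then have "- {m. Z x m} \<in> U"
      using \<sigma>(2) x(1) ultrafilter_Compl[OF assms(3)] by blast
    then show "\<exists>x. is_branch q x \<and> init_seg x (length \<nu>) = \<nu> \<and> {m. Z x m = False} \<in> U"
      using x by (auto simp: Compl_eq)
  qed (rule \<sigma>(1))
qed

section \<open>The deciding condition\<close>

locale homogeneous_cone =
  fixes H :: "nat \<Rightarrow> 'a set" and U :: "nat set set" and X :: "nat \<Rightarrow> 'a list set set"
    and q :: "'a list set" and ll :: "nat \<Rightarrow> nat" and c :: bool and \<sigma> :: "'a list"
  assumes H_finite: "\<And>n. finite (H n)" and H_nonempty: "\<And>n. H n \<noteq> {}"
    and p_point: "p_point U" and nonprincipal: "\<And>k. {k} \<notin> U"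
    and X_name: "set_name (PT H) X"
    and q_PT: "q \<in> PT H" and ll_strict_mono: "strict_mono ll"
    and q_decides: "\<And>m \<eta>. \<eta> \<in> q \<Longrightarrow> ll m \<le> length \<eta> \<Longrightarrow> decides (PT H) X (subtree q \<eta>) m"
    and \<sigma>_in_q: "\<sigma> \<in> q"
    and homogeneous: "\<And>\<nu>. \<nu> \<in> q \<Longrightarrow> is_prefix \<sigma> \<nu> \<Longrightarrow>
      \<exists>x. is_branch q x \<and> init_seg x (length \<nu>) = \<nu> \<and>
        {m. (subtree q (init_seg x (ll m)) \<in> X m) = c} \<in> U"
begin

lemma ultrafilter: "ultrafilter_on_nat U"
  using p_point unfolding p_point_def by blast

lemma ll_ge: "m \<le> ll m"
  using strict_mono_imp_increasing[OF ll_strict_mono] .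

definition agree :: "(nat \<Rightarrow> 'a) \<Rightarrow> nat set" where
  "agree x = {m. (subtree q (init_seg x (ll m)) \<in> X m) = c}"

definition cone :: "'a list set" where
  "cone = {\<nu> \<in> q. is_prefix \<sigma> \<nu>}"

lemma cone_length: "\<nu> \<in> cone \<Longrightarrow> length \<sigma> \<le> length \<nu>"
  unfolding cone_def using is_prefix_length_le by blast

lemma cone_take: "\<nu> \<in> cone \<Longrightarrow> length \<sigma> \<le> k \<Longrightarrow> take k \<nu> \<in> cone"
  unfolding cone_def using PT_take[OF q_PT] by (auto simp: min.absorb1)

definition witness :: "'a list \<Rightarrow> nat \<Rightarrow> 'a" where
  "witness \<nu> = (SOME x. is_branch q x \<and> init_seg x (length \<nu>) = \<nu> \<and> agree x \<in> U)"

lemma witness: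
  assumes "\<nu> \<in> cone"
  shows "is_branch q (witness \<nu>) \<and> init_seg (witness \<nu>) (length \<nu>) = \<nu> \<and> agree (witness \<nu>) \<in> U"
proof -
  have "\<exists>x. is_branch q x \<and> init_seg x (length \<nu>) = \<nu> \<and> agree x \<in> U"
    using homogeneous assms unfolding cone_def agree_def by blast
  then show ?thesis
    unfolding witness_def by (rule someI_ex)
qed

lemma finite_cone_up_to: "finite {\<nu> \<in> cone. length \<nu> \<le> n}"
  using PT_finite_up_to_level[OF q_PT H_finite, of n] by (rule rev_finite_subset) (auto simp: cone_def)

definition common_agree :: "nat \<Rightarrow> nat set" where
  "common_agree n = (\<Inter>\<nu>\<in>{\<nu> \<in> cone. length \<nu> \<le> n}. agree (witness \<nu>))"

lemma common_agree_in_U: "common_agree n \<in> U"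
  unfolding common_agree_def
  by (rule ultrafilter_finite_Inter[OF ultrafilter finite_cone_up_to]) (use witness in blast)

lemma common_agree_subset: "\<nu> \<in> cone \<Longrightarrow> length \<nu> \<le> n \<Longrightarrow> common_agree n \<subseteq> agree (witness \<nu>)"
  unfolding common_agree_def by blast

text \<open>The canonical branch through \<open>\<nu>\<close> is the witness chosen at the shortest initial segment of
  \<open>\<nu>\<close> (above \<open>\<sigma>\<close>) whose witness passes through \<open>\<nu>\<close>. Following it does not change it, so the
  canonical branches of the nodes along a canonical branch are all the same witness.\<close>

definition canonical_level :: "'a list \<Rightarrow> nat" where
  "canonical_level \<nu> = (LEAST k. length \<sigma> \<le> k \<and> init_seg (witness (take k \<nu>)) (length \<nu>) = \<nu>)"

definition canonical :: "'a list \<Rightarrow> nat \<Rightarrow> 'a" where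
  "canonical \<nu> = witness (take (canonical_level \<nu>) \<nu>)"

lemma canonical_level:
  assumes "\<nu> \<in> cone"
  shows "length \<sigma> \<le> canonical_level \<nu> \<and> canonical_level \<nu> \<le> length \<nu> \<and>
    init_seg (canonical \<nu>) (length \<nu>) = \<nu>"
proof -
  have \<nu>: "length \<sigma> \<le> length \<nu> \<and> init_seg (witness (take (length \<nu>) \<nu>)) (length \<nu>) = \<nu>"
    using witness[OF assms] cone_length[OF assms] by simp
  have "length \<sigma> \<le> canonical_level \<nu> \<and>
      init_seg (witness (take (canonical_level \<nu>) \<nu>)) (length \<nu>) = \<nu>"
    unfolding canonical_level_def by (rule LeastI[of _ "length \<nu>"]) (rule \<nu>)
  moreover have "canonical_level \<nu> \<le> length \<nu>"
    unfolding canonical_level_def by (rule Least_le) (rule \<nu>)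
  ultimately show ?thesis
    by (simp add: canonical_def)
qed

lemma canonical:
  assumes "\<nu> \<in> cone"
  shows "is_branch q (canonical \<nu>) \<and> init_seg (canonical \<nu>) (length \<nu>) = \<nu> \<and>
    (\<exists>\<mu>\<in>cone. length \<mu> \<le> length \<nu> \<and> canonical \<nu> = witness \<mu>)"
proof -
  define \<mu> where "\<mu> = take (canonical_level \<nu>) \<nu>"
  have "\<mu> \<in> cone"
    using cone_take[OF assms] canonical_level[OF assms] \<mu>_def by blast
  moreover have "canonical \<nu> = witness \<mu>" "length \<mu> \<le> length \<nu>"
    by (simp_all add: \<mu>_def canonical_def)
  moreover have "is_branch q (canonical \<nu>)"
    using witness[OF \<open>\<mu> \<in> cone\<close>] \<open>canonical \<nu> = witness \<mu>\<close> by simp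
  ultimately show ?thesis
    using canonical_level[OF assms] by blast
qed

lemma cone_snoc_canonical:
  assumes "\<nu> \<in> cone"
  shows "\<nu> @ [canonical \<nu> (length \<nu>)] \<in> cone"
proof -
  have "\<nu> @ [canonical \<nu> (length \<nu>)] = init_seg (canonical \<nu>) (Suc (length \<nu>))"
    using canonical[OF assms] by (simp add: init_seg_Suc)
  then have "\<nu> @ [canonical \<nu> (length \<nu>)] \<in> q"
    using canonical[OF assms] unfolding is_branch_def by metis
  then show ?thesis
    using assms cone_length[OF assms] unfolding cone_def by simp
qed

lemma canonical_snoc:
  assumes "\<nu> \<in> cone"
  shows "canonical (\<nu> @ [canonical \<nu> (length \<nu>)]) = canonical \<nu>"
proof -
  define \<nu>' where "\<nu>' = \<nu> @ [canonical \<nu> (length \<nu>)]"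
  define k where "k = canonical_level \<nu>"
  have k: "length \<sigma> \<le> k" "k \<le> length \<nu>" "init_seg (witness (take k \<nu>)) (length \<nu>) = \<nu>"
    using canonical_level[OF assms] unfolding k_def canonical_def by auto
  have take_k: "take k \<nu>' = take k \<nu>"
    using k(2) \<nu>'_def by simp
  have "init_seg (witness (take k \<nu>')) (length \<nu>') = \<nu>'"
    using canonical[OF assms] take_k unfolding \<nu>'_def k_def canonical_def by (simp add: init_seg_Suc)
  moreover have "k \<le> y" if "length \<sigma> \<le> y" "init_seg (witness (take y \<nu>')) (length \<nu>') = \<nu>'" for y
  proof (rule ccontr)
    assume "\<not> k \<le> y"
    then have "take y \<nu>' = take y \<nu>"
      using k(2) \<nu>'_def by simp
    have "init_seg (witness (take y \<nu>)) (length \<nu>) =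
        take (length \<nu>) (init_seg (witness (take y \<nu>)) (length \<nu>'))"
      by (simp add: take_init_seg \<nu>'_def)
    also have "\<dots> = \<nu>"
      using that(2) \<open>take y \<nu>' = take y \<nu>\<close> by (simp add: \<nu>'_def)
    finally have "init_seg (witness (take y \<nu>)) (length \<nu>) = \<nu>" .
    then have "k \<le> y"
      unfolding k_def canonical_level_def using that(1) by (simp add: Least_le)
    with \<open>\<not> k \<le> y\<close> show False ..
  qed
  ultimately have "canonical_level \<nu>' = k"
    unfolding canonical_level_def using k(1) by (intro Least_equality) auto
  then show ?thesis
    using take_k unfolding \<nu>'_def canonical_def k_def by simp
qed

definition pseudo_intersection :: "nat set" where
  "pseudo_intersection = (SOME W. W \<in> U \<and> (\<forall>n. finite (W - common_agree n)))"

lemma pseudo_intersection: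
  "pseudo_intersection \<in> U \<and> (\<forall>n. finite (pseudo_intersection - common_agree n))"
proof -
  have "\<exists>W. W \<in> U \<and> (\<forall>n. finite (W - common_agree n))"
    using p_point common_agree_in_U unfolding p_point_def by blast
  then show ?thesis
    unfolding pseudo_intersection_def by (rule someI_ex)
qed

definition tail_start :: "nat \<Rightarrow> nat" where
  "tail_start n = (SOME b. \<forall>m\<in>pseudo_intersection - common_agree n. m < b)"

lemma tail_start: "m \<in> pseudo_intersection \<Longrightarrow> tail_start n \<le> m \<Longrightarrow> m \<in> common_agree n"
proof -
  have "\<exists>b. \<forall>m\<in>pseudo_intersection - common_agree n. m < b"
    using pseudo_intersection finite_nat_set_iff_bounded by blast
  then have "\<forall>m\<in>pseudo_intersection - common_agree n. m < tail_start n"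
    unfolding tail_start_def by (rule someI_ex)
  then show "m \<in> pseudo_intersection \<Longrightarrow> tail_start n \<le> m \<Longrightarrow> m \<in> common_agree n"
    using not_le by blast
qed

definition splitting_bound :: "nat \<Rightarrow> nat" where
  "splitting_bound L = (SOME b. \<forall>\<mu>\<in>{\<mu> \<in> cone. length \<mu> \<le> L}.
     \<exists>k<b. L \<le> k \<and> splitting H q (init_seg (witness \<mu>) k))"

lemma splitting_bound:
  assumes "\<mu> \<in> cone" "length \<mu> \<le> L"
  shows "\<exists>k<splitting_bound L. L \<le> k \<and> splitting H q (init_seg (witness \<mu>) k)"
proof -
  have "\<forall>\<mu>\<in>{\<mu> \<in> cone. length \<mu> \<le> L}. \<exists>k. L \<le> k \<and> splitting H q (init_seg (witness \<mu>) k)"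
    using branch_splitting_above[OF q_PT] witness by blast
  then obtain g where g: "\<forall>\<mu>\<in>{\<mu> \<in> cone. length \<mu> \<le> L}.
      L \<le> g \<mu> \<and> splitting H q (init_seg (witness \<mu>) (g \<mu>))"
    by (rule bchoice[elim_format]) blast
  obtain b where "\<forall>k\<in>g ` {\<mu> \<in> cone. length \<mu> \<le> L}. k < b"
    using finite_cone_up_to finite_nat_set_iff_bounded by blast
  then have "\<exists>b. \<forall>\<mu>\<in>{\<mu> \<in> cone. length \<mu> \<le> L}.
      \<exists>k<b. L \<le> k \<and> splitting H q (init_seg (witness \<mu>) k)"
    using g by blast
  then have "\<forall>\<mu>\<in>{\<mu> \<in> cone. length \<mu> \<le> L}.
      \<exists>k<splitting_bound L. L \<le> k \<and> splitting H q (init_seg (witness \<mu>) k)"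
    unfolding splitting_bound_def by (rule someI_ex)
  then show ?thesis
    using assms by blast
qed

definition gap_end :: "nat \<Rightarrow> nat" where
  "gap_end L = Suc (max L (splitting_bound L))"

text \<open>Levels from \<open>ll (block j)\<close> below
  \<open>gap_end (ll (block j))\<close> are reserved for splitting when block \<open>j\<close> is not chosen; the next block
  starts beyond them and beyond \<open>tail_start\<close> of the freeze level \<open>gap_end (ll (block j))\<close>.\<close>

primrec block :: "nat \<Rightarrow> nat" where
  "block 0 = max (length \<sigma>) (tail_start (length \<sigma>))"
| "block (Suc j) = max (Suc (block j)) (max (gap_end (ll (block j))) (tail_start (gap_end (ll (block j)))))"

definition freeze_level :: "nat \<Rightarrow> nat" where
  "freeze_level j = (case j of 0 \<Rightarrow> length \<sigma> | Suc i \<Rightarrow> gap_end (ll (block i)))"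

lemma block_strict_mono: "strict_mono block"
  by (simp add: strict_mono_Suc_iff less_max_iff_disj)

lemma block_mono: "i \<le> j \<Longrightarrow> block i \<le> block j"
  using block_strict_mono strict_mono_less_eq by blast

lemma gap_end_le_block: "gap_end (ll (block j)) \<le> block (Suc j)"
  by (simp add: le_max_iff_disj)

lemma ll_block_less_gap_end: "ll (block j) < gap_end (ll (block j))"
  by (simp add: gap_end_def)

lemma gap_end_mono: "i \<le> j \<Longrightarrow> gap_end (ll (block i)) \<le> gap_end (ll (block j))"
proof (cases "i = j")
  case False
  moreover assume "i \<le> j"
  ultimately have "gap_end (ll (block i)) \<le> block j"
    using block_mono[of "Suc i" j] gap_end_le_block[of i] by simp
  also have "\<dots> \<le> ll (block j)"
    using ll_ge .
  also have "\<dots> \<le> gap_end (ll (block j))"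
    using ll_block_less_gap_end less_imp_le by blast
  finally show ?thesis .
qed simp

lemma freeze_level:
  "length \<sigma> \<le> freeze_level j \<and> freeze_level j \<le> block j \<and> tail_start (freeze_level j) \<le> block j"
proof (cases j)
  case (Suc i)
  have "length \<sigma> \<le> block i"
    using block_mono[of 0 i] by simp
  also have "\<dots> \<le> ll (block i)"
    using ll_ge .
  also have "\<dots> \<le> gap_end (ll (block i))"
    using ll_block_less_gap_end less_imp_le by blast
  finally show ?thesis
    using Suc by (simp add: freeze_level_def le_max_iff_disj)
qed (simp add: freeze_level_def)

lemma gap_end_le_freeze_level: "i < j \<Longrightarrow> gap_end (ll (block i)) \<le> freeze_level j"
  by (cases j) (simp_all add: freeze_level_def gap_end_mono)

definition chosen_blocks :: "nat set" where
  "chosen_blocks = (SOME J. (\<forall>n. \<exists>j\<ge>n. j \<notin> J) \<and> {m. \<exists>j\<in>J. block j \<le> m \<and> m < block (Suc j)} \<in> U)"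

lemma chosen_blocks:
  "(\<forall>n. \<exists>j\<ge>n. j \<notin> chosen_blocks) \<and>
    {m. \<exists>j\<in>chosen_blocks. block j \<le> m \<and> m < block (Suc j)} \<in> U"
  unfolding chosen_blocks_def
  by (rule someI_ex) (rule ultrafilter_sparse_blocks[OF ultrafilter nonprincipal block_strict_mono])

definition split_levels :: "nat set" where
  "split_levels = {k. \<exists>j. j \<notin> chosen_blocks \<and> ll (block j) \<le> k \<and> k < gap_end (ll (block j))}"

definition admissible :: "'a list \<Rightarrow> nat \<Rightarrow> bool" where
  "admissible \<eta> k \<longleftrightarrow>
    (k \<in> split_levels \<and> splitting H q (take k \<eta>)) \<or> \<eta> ! k = canonical (take k \<eta>) k"

definition tree :: "'a list set" where
  "tree = {\<eta> \<in> q. is_prefix \<eta> \<sigma> \<or> (is_prefix \<sigma> \<eta> \<and> (\<forall>k\<in>{length \<sigma>..<length \<eta>}. admissible \<eta> k))}"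

definition good_set :: "nat set" where
  "good_set = pseudo_intersection \<inter> {m. \<exists>j\<in>chosen_blocks. block j \<le> m \<and> m < block (Suc j)}"

lemma good_set_in_U: "good_set \<in> U"
  unfolding good_set_def using ultrafilter_Int[OF ultrafilter] pseudo_intersection chosen_blocks by blast

lemma admissible_take: "k' < k \<Longrightarrow> admissible (take k \<eta>) k' \<longleftrightarrow> admissible \<eta> k'"
  by (simp add: admissible_def min.absorb1)

lemma admissible_snoc:
  "admissible (\<eta> @ [i]) (length \<eta>) \<longleftrightarrow>
    (length \<eta> \<in> split_levels \<and> splitting H q \<eta>) \<or> i = canonical \<eta> (length \<eta>)"
  by (simp add: admissible_def)

lemma tree_subset: "tree \<subseteq> q"
  unfolding tree_def by blast

lemma \<sigma>_in_tree: "\<sigma> \<in> tree"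
  unfolding tree_def using \<sigma>_in_q by simp

lemma tree_above:
  assumes "\<eta> \<in> tree" "length \<sigma> \<le> length \<eta>"
  shows "is_prefix \<sigma> \<eta> \<and> (\<forall>k\<in>{length \<sigma>..<length \<eta>}. admissible \<eta> k)"
proof -
  have "length \<eta> = length \<sigma> \<Longrightarrow> is_prefix \<eta> \<sigma> \<Longrightarrow> \<eta> = \<sigma>"
    by simp
  then show ?thesis
    using assms is_prefix_length_le unfolding tree_def by fastforce
qed

lemma tree_below: "\<eta> \<in> tree \<Longrightarrow> length \<eta> < length \<sigma> \<Longrightarrow> is_prefix \<eta> \<sigma>"
  unfolding tree_def using is_prefix_length_le by fastforce

lemma tree_cone: "\<eta> \<in> tree \<Longrightarrow> length \<sigma> \<le> length \<eta> \<Longrightarrow> \<eta> \<in> cone"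
  using tree_above tree_subset unfolding cone_def by blast

lemma snoc_mem_tree:
  assumes "\<eta> \<in> tree" "length \<sigma> \<le> length \<eta>"
  shows "\<eta> @ [i] \<in> tree \<longleftrightarrow> \<eta> @ [i] \<in> q \<and> admissible (\<eta> @ [i]) (length \<eta>)"
proof -
  have "is_prefix \<sigma> (\<eta> @ [i])" "\<not> is_prefix (\<eta> @ [i]) \<sigma>"
    using tree_above[OF assms] assms(2) is_prefix_length_le by fastforce+
  moreover have "admissible (\<eta> @ [i]) k \<longleftrightarrow> admissible \<eta> k" if "k < length \<eta>" for k
    using admissible_take[OF that, of "\<eta> @ [i]"] by simp
  ultimately show ?thesis
    using tree_above[OF assms] unfolding tree_def by (auto simp: less_Suc_eq)
qed

lemma succ_of_tree_above:
  assumes "\<eta> \<in> tree" "length \<sigma> \<le> length \<eta>"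
  shows "succ_of tree \<eta> =
    (if length \<eta> \<in> split_levels \<and> splitting H q \<eta> then succ_of q \<eta> else {canonical \<eta> (length \<eta>)})"
proof -
  have "\<eta> @ [canonical \<eta> (length \<eta>)] \<in> q"
    using cone_snoc_canonical[OF tree_cone[OF assms]] by (simp add: cone_def)
  then show ?thesis
    using snoc_mem_tree[OF assms] admissible_snoc by (auto simp: succ_of_def)
qed

lemma succ_of_tree_below:
  assumes "\<eta> \<in> tree" "length \<eta> < length \<sigma>"
  shows "succ_of tree \<eta> = {\<sigma> ! length \<eta>}"
proof -
  have next_node: "take (Suc (length \<eta>)) \<sigma> = \<eta> @ [\<sigma> ! length \<eta>]"
    using tree_below[OF assms] assms(2) by (metis take_Suc_conv_app_nth)
  have "\<eta> @ [i] \<in> tree \<longleftrightarrow> i = \<sigma> ! length \<eta>" for i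
  proof
    assume \<eta>i: "\<eta> @ [i] \<in> tree"
    have "is_prefix (\<eta> @ [i]) \<sigma>"
    proof (cases "length (\<eta> @ [i]) < length \<sigma>")
      case False
      then have "length (\<eta> @ [i]) = length \<sigma>"
        using assms(2) by simp
      moreover have "is_prefix \<sigma> (\<eta> @ [i])"
        using tree_above[OF \<eta>i] calculation by simp
      ultimately have "\<eta> @ [i] = \<sigma>"
        by simp
      then show ?thesis
        by simp
    qed (use tree_below[OF \<eta>i] in blast)
    then have "\<eta> @ [i] = \<eta> @ [\<sigma> ! length \<eta>]"
      using next_node by (metis length_append_singleton)
    then show "i = \<sigma> ! length \<eta>"
      by simp
  next
    have "\<eta> @ [\<sigma> ! length \<eta>] \<in> q"
      using next_node PT_take[OF q_PT \<sigma>_in_q] by metis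
    moreover have "is_prefix (\<eta> @ [\<sigma> ! length \<eta>]) \<sigma>"
      using next_node by (metis length_append_singleton)
    moreover assume "i = \<sigma> ! length \<eta>"
    ultimately show "\<eta> @ [i] \<in> tree"
      unfolding tree_def by simp
  qed
  then show ?thesis
    by (auto simp: succ_of_def)
qed

lemma tree_succ_nonempty: "\<eta> \<in> tree \<Longrightarrow> \<exists>i. \<eta> @ [i] \<in> tree"
proof -
  assume \<eta>: "\<eta> \<in> tree"
  have "succ_of tree \<eta> \<noteq> {}"
  proof (cases "length \<eta> < length \<sigma>")
    case False
    then show ?thesis
      using succ_of_tree_above[OF \<eta>] H_nonempty by (simp add: splitting_def)
  qed (simp add: succ_of_tree_below[OF \<eta>])
  then show ?thesis
    by auto
qed

lemma tree_take: "\<eta> \<in> tree \<Longrightarrow> take k \<eta> \<in> tree"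
proof -
  assume \<eta>: "\<eta> \<in> tree"
  have "take k \<eta> \<in> q"
    using PT_take[OF q_PT] \<eta> tree_subset by blast
  moreover have "is_prefix (take k \<eta>) \<sigma> \<or>
      (is_prefix \<sigma> (take k \<eta>) \<and> (\<forall>k'\<in>{length \<sigma>..<length (take k \<eta>)}. admissible (take k \<eta>) k'))"
  proof (cases "length \<sigma> \<le> length \<eta>")
    case True
    note \<eta>_above = tree_above[OF \<eta> True]
    show ?thesis
    proof (cases "length \<sigma> \<le> k")
      case True
      have "is_prefix \<sigma> (take k \<eta>)"
        using \<eta>_above True by (metis min.absorb1 take_take)
      moreover have "admissible (take k \<eta>) k'" if "k' \<in> {length \<sigma>..<length (take k \<eta>)}" for k'
        using that \<eta>_above admissible_take[of k' k \<eta>] by simp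
      ultimately show ?thesis
        by blast
    next
      case False
      then have "take k \<eta> = take k \<sigma>"
        using \<eta>_above by (metis nat_le_linear min.absorb1 take_take)
      then show ?thesis
        using is_prefix_take[of \<sigma> \<sigma> k] by simp
    qed
  next
    case False
    then have "is_prefix (take k \<eta>) \<sigma>"
      using tree_below[OF \<eta>] is_prefix_take by (metis not_le)
    then show ?thesis
      by blast
  qed
  ultimately show ?thesis
    unfolding tree_def by blast
qed

lemma tree_canonical_path:
  assumes "\<rho> \<in> tree" "length \<sigma> \<le> length \<rho>" "length \<rho> \<le> k"
  shows "init_seg (canonical \<rho>) k \<in> tree \<and> canonical (init_seg (canonical \<rho>) k) = canonical \<rho>"
  using assms(3)
proof (induction k rule: dec_induct)
  case base
  then show ?case
    using canonical[OF tree_cone[OF assms(1,2)]] assms(1) by simp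
next
  case (step k)
  define \<nu> where "\<nu> = init_seg (canonical \<rho>) k"
  have \<nu>: "\<nu> \<in> tree" "canonical \<nu> = canonical \<rho>" "length \<sigma> \<le> length \<nu>"
    using step assms(2) \<nu>_def by auto
  have "\<nu> @ [canonical \<nu> (length \<nu>)] \<in> tree"
    using snoc_mem_tree[OF \<nu>(1,3)] admissible_snoc cone_snoc_canonical[OF tree_cone[OF \<nu>(1,3)]]
    by (simp add: cone_def)
  moreover have "\<nu> @ [canonical \<nu> (length \<nu>)] = init_seg (canonical \<rho>) (Suc k)"
    using \<nu>(2) by (simp add: \<nu>_def init_seg_Suc)
  moreover have "canonical (\<nu> @ [canonical \<nu> (length \<nu>)]) = canonical \<rho>"
    using canonical_snoc[OF tree_cone[OF \<nu>(1,3)]] \<nu>(2) by simp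
  ultimately show ?case
    by simp
qed

text \<open>Splitting nodes of the tree are found on canonical branches, at the levels reserved for
  a block outside \<open>chosen_blocks\<close>; there are such blocks arbitrarily far out.\<close>

lemma tree_splitting_extension:
  assumes "\<eta> \<in> tree"
  shows "\<exists>\<nu>\<in>tree. is_prefix \<eta> \<nu> \<and> splitting H tree \<nu>"
proof -
  obtain \<eta>' where \<eta>': "\<eta>' \<in> tree" "is_prefix \<eta> \<eta>'" "length \<sigma> \<le> length \<eta>'"
  proof (cases "length \<sigma> \<le> length \<eta>")
    case False
    then show ?thesis
      using that[of \<sigma>] \<sigma>_in_tree tree_below[OF assms] by simp
  qed (use that assms in simp)
  obtain j where j: "length \<eta>' \<le> j" "j \<notin> chosen_blocks"
    using chosen_blocks by blast
  define L where "L = ll (block j)"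
  have "length \<eta>' \<le> L"
    using j(1) strict_mono_imp_increasing[OF block_strict_mono, of j] ll_ge[of "block j"] L_def
    by linarith
  then obtain \<rho> where \<rho>: "\<rho> \<in> tree" "length \<rho> = L" "is_prefix \<eta>' \<rho>"
    using extend_to_length[of tree, OF tree_succ_nonempty \<eta>'(1)] by blast
  have \<rho>_above: "length \<sigma> \<le> length \<rho>"
    using \<rho>(2) \<open>length \<eta>' \<le> L\<close> \<eta>'(3) by simp
  obtain \<mu> where \<mu>: "\<mu> \<in> cone" "length \<mu> \<le> L" "canonical \<rho> = witness \<mu>"
    using canonical[OF tree_cone[OF \<rho>(1) \<rho>_above]] \<rho>(2) by auto
  obtain k where k: "k < splitting_bound L" "L \<le> k" "splitting H q (init_seg (witness \<mu>) k)"
    using splitting_bound[OF \<mu>(1,2)] by blast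
  define \<nu> where "\<nu> = init_seg (canonical \<rho>) k"
  have \<nu>: "\<nu> \<in> tree" "length \<sigma> \<le> length \<nu>"
    using tree_canonical_path[OF \<rho>(1) \<rho>_above] \<rho>(2) k(2) \<rho>_above \<nu>_def by auto
  have "k \<in> split_levels"
    unfolding split_levels_def using j(2) k(1,2) L_def by (auto simp: gap_end_def)
  then have "splitting H tree \<nu>"
    using succ_of_tree_above[OF \<nu>] k(3) \<mu>(3) \<nu>_def by (simp add: splitting_def)
  moreover have "is_prefix \<rho> \<nu>"
    using canonical[OF tree_cone[OF \<rho>(1) \<rho>_above]] \<rho>(2) k(2) by (simp add: \<nu>_def take_init_seg)
  then have "is_prefix \<eta> \<nu>"
    using \<eta>'(2) \<rho>(3) is_prefix_trans by blast
  ultimately show ?thesis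
    using \<nu>(1) by blast
qed

lemma tree_PT: "tree \<in> PT H"
proof (rule PTI)
  show "tree \<noteq> {}"
    using \<sigma>_in_tree by blast
next
  fix \<eta> l
  assume "\<eta> \<in> tree" "l < length \<eta>"
  then show "\<eta> ! l \<in> H l"
    using PT_nth[OF q_PT] tree_subset by blast
next
  fix \<eta>
  assume \<eta>: "\<eta> \<in> tree"
  show "(\<exists>i. succ_of tree \<eta> = {i}) \<or> splitting H tree \<eta>"
  proof (cases "length \<eta> < length \<sigma>")
    case False
    then show ?thesis
      using succ_of_tree_above[OF \<eta>] by (auto simp: splitting_def)
  qed (use succ_of_tree_below[OF \<eta>] in blast)
qed (use tree_take tree_splitting_extension in blast)+

lemma no_split_levels_in_block:
  assumes "j \<in> chosen_blocks" "m < block (Suc j)" "freeze_level j \<le> k" "k < ll m"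
  shows "k \<notin> split_levels"
proof
  assume "k \<in> split_levels"
  then obtain i where i: "i \<notin> chosen_blocks" "ll (block i) \<le> k" "k < gap_end (ll (block i))"
    unfolding split_levels_def by blast
  then consider "i < j" | "j < i"
    using assms(1) by (metis linorder_neqE_nat)
  then show False
  proof cases
    case 1
    then show False
      using gap_end_le_freeze_level[OF 1] i(3) assms(3) by simp
  next
    case 2
    have "m < block i"
      using less_le_trans[OF assms(2) block_mono[OF Suc_leI[OF 2]]] .
    then have "ll m < ll (block i)"
      using ll_strict_mono by (simp add: strict_mono_less)
    then show False
      using i(2) assms(4) by simp
  qed
qed

lemma tree_canonical_frozen:
  assumes "\<eta> \<in> tree" "length \<sigma> \<le> P" "P \<le> length \<eta>"
    and no_split: "\<And>k. P \<le> k \<Longrightarrow> k < length \<eta> \<Longrightarrow> k \<notin> split_levels"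
  shows "canonical \<eta> = canonical (take P \<eta>)"
proof -
  have "canonical (take k \<eta>) = canonical (take P \<eta>)" if "P \<le> k" "k \<le> length \<eta>" for k
    using that
  proof (induction k rule: dec_induct)
    case (step k)
    have k_cone: "take k \<eta> \<in> cone"
      using tree_cone[OF tree_take[OF assms(1)]] assms(2) step.hyps step.prems by simp
    have "admissible \<eta> k"
      using tree_above[OF assms(1)] assms(2) step.hyps step.prems by simp
    then have "\<eta> ! k = canonical (take k \<eta>) k"
      using no_split[of k] step.hyps step.prems unfolding admissible_def by simp
    then have "take (Suc k) \<eta> = take k \<eta> @ [canonical (take k \<eta>) (length (take k \<eta>))]"
      using step.prems by (simp add: take_Suc_conv_app_nth)
    then show ?case
      using canonical_snoc[OF k_cone] step.IH step.prems by simp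
  qed simp
  from this[of "length \<eta>"] show ?thesis
    using assms(3) by simp
qed

text \<open>For \<open>m\<close> in the \<open>j\<close>-th chosen block no splitting happens between \<open>freeze_level j\<close>
  and \<open>ll m\<close>, so a node \<open>\<eta>\<close> of length \<open>ll m\<close> follows the witness of a node of length at most
  \<open>freeze_level j\<close>; as \<open>m \<ge> tail_start (freeze_level j)\<close> lies in the pseudo-intersection, it
  lies in the agreement set of that witness.\<close>

lemma tree_colour:
  assumes "m \<in> good_set" "\<eta> \<in> tree" "length \<eta> = ll m"
  shows "(subtree q \<eta> \<in> X m) = c"
proof -
  obtain j where j: "m \<in> pseudo_intersection" "j \<in> chosen_blocks" "block j \<le> m" "m < block (Suc j)"
    using assms(1) unfolding good_set_def by blast
  define P where "P = freeze_level j"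
  have P: "length \<sigma> \<le> P" "P \<le> block j" "tail_start P \<le> block j"
    using freeze_level P_def by auto
  have "P \<le> length \<eta>"
    using P(2) j(3) ll_ge[of m] assms(3) by linarith
  have \<eta>_cone: "\<eta> \<in> cone"
    using tree_cone[OF assms(2)] P(1) \<open>P \<le> length \<eta>\<close> by simp
  have "k \<notin> split_levels" if "P \<le> k" "k < length \<eta>" for k
    using no_split_levels_in_block[OF j(2,4)] that P_def assms(3) by simp
  then have "canonical \<eta> = canonical (take P \<eta>)"
    using tree_canonical_frozen[OF assms(2) P(1) \<open>P \<le> length \<eta>\<close>] by blast
  moreover obtain \<mu> where \<mu>: "\<mu> \<in> cone" "length \<mu> \<le> P" "canonical (take P \<eta>) = witness \<mu>"
    using canonical[OF cone_take[OF \<eta>_cone P(1)]] \<open>P \<le> length \<eta>\<close> by auto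
  moreover have "m \<in> common_agree P"
    using tail_start j(1) P(3) j(3) by simp
  ultimately have "m \<in> agree (canonical \<eta>)"
    using common_agree_subset[OF \<mu>(1,2)] by auto
  moreover have "init_seg (canonical \<eta>) (ll m) = \<eta>"
    using canonical[OF \<eta>_cone] assms(3) by simp
  ultimately show ?thesis
    unfolding agree_def by simp
qed

lemma subcondition_coloured:
  assumes "r \<in> PT H" "r \<subseteq> tree" "n \<in> good_set"
  obtains \<eta> where "\<eta> \<in> q" "ll n \<le> length \<eta>" "subtree r \<eta> \<in> PT H" "subtree r \<eta> \<subseteq> r"
    "subtree r \<eta> \<subseteq> subtree q \<eta>" "(subtree q \<eta> \<in> X n) = c"
proof -
  obtain \<eta> where \<eta>: "\<eta> \<in> r" "length \<eta> = ll n"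
    using PT_level_nonempty[OF assms(1) H_nonempty] by blast
  then have "\<eta> \<in> tree"
    using assms(2) by blast
  show ?thesis
  proof (rule that)
    show "\<eta> \<in> q"
      using \<open>\<eta> \<in> tree\<close> tree_subset by blast
    show "ll n \<le> length \<eta>"
      using \<eta>(2) by simp
    show "subtree r \<eta> \<in> PT H"
      using subtree_PT[OF assms(1) \<eta>(1)] .
    show "subtree r \<eta> \<subseteq> r"
      by (rule subtree_subset)
    show "subtree r \<eta> \<subseteq> subtree q \<eta>"
      using subtree_mono assms(2) tree_subset by (metis order_trans)
    show "(subtree q \<eta> \<in> X n) = c"
      using tree_colour[OF assms(3) \<open>\<eta> \<in> tree\<close> \<eta>(2)] .
  qed
qed

lemma tree_forces_good_set:
  assumes c "n \<in> good_set"
  shows "tree \<in> X n"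
proof (rule set_name_dense[OF X_name tree_PT])
  show "dense_below (PT H) (X n) tree"
    unfolding dense_below_def
  proof (intro ballI impI)
    fix r
    assume r: "r \<in> PT H" "r \<subseteq> tree"
    obtain \<eta> where \<eta>: "subtree r \<eta> \<in> PT H" "subtree r \<eta> \<subseteq> r"
        "subtree r \<eta> \<subseteq> subtree q \<eta>" "(subtree q \<eta> \<in> X n) = c"
      by (rule subcondition_coloured[OF r assms(2)])
    then have "subtree r \<eta> \<in> X n"
      using set_name_open[OF X_name _ \<eta>(1,3)] assms(1) by simp
    then show "\<exists>r'\<in>X n. r' \<subseteq> r"
      using \<eta>(2) by blast
  qed
qed

lemma tree_refutes_good_set:
  assumes "\<not> c" "n \<in> good_set" "r \<in> PT H" "r \<subseteq> tree"
  shows "r \<notin> X n"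
proof
  assume "r \<in> X n"
  obtain \<eta> where \<eta>: "\<eta> \<in> q" "ll n \<le> length \<eta>" "subtree r \<eta> \<in> PT H" "subtree r \<eta> \<subseteq> r"
      "subtree r \<eta> \<subseteq> subtree q \<eta>" "(subtree q \<eta> \<in> X n) = c"
    by (rule subcondition_coloured[OF assms(3,4,2)])
  then have "\<forall>r'\<in>PT H. r' \<subseteq> subtree q \<eta> \<longrightarrow> r' \<notin> X n"
    using q_decides[OF \<eta>(1,2)] assms(1) unfolding decides_def by simp
  moreover have "subtree r \<eta> \<in> X n"
    using set_name_open[OF X_name \<open>r \<in> X n\<close> \<eta>(3,4)] .
  ultimately show False
    using \<eta>(3,5) by blast
qed

lemma tree_decides_good_set:
  "(\<forall>n\<in>good_set. tree \<in> X n) \<or> (\<forall>n\<in>good_set. \<forall>r\<in>PT H. r \<subseteq> tree \<longrightarrow> r \<notin> X n)"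
  using tree_forces_good_set tree_refutes_good_set by blast

end

lemma principal_point_decided:
  assumes "set_name P X" "p \<in> P" "{k} \<in> U"
  shows "\<exists>q\<in>P. q \<subseteq> p \<and> (\<exists>u\<in>U. (\<forall>n\<in>u. q \<in> X n) \<or> (\<forall>n\<in>u. \<forall>r\<in>P. r \<subseteq> q \<longrightarrow> r \<notin> X n))"
proof -
  obtain q where "q \<in> P" "q \<subseteq> p" "decides P X q k"
    using decides_dense[OF assms(1,2)] by blast
  then show ?thesis
    using assms(3) unfolding decides_def by (intro bexI[of _ q] conjI bexI[of _ "{k}"]) auto
qed

lemma nonprincipal_p_point_decided:
  assumes "\<And>n. finite (H n)" "\<And>n. H n \<noteq> {}" "p_point U" "\<And>k. {k} \<notin> U"
    and X: "set_name (PT H) X" and p: "p \<in> PT H"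
  shows "\<exists>q\<in>PT H. q \<subseteq> p \<and>
    (\<exists>u\<in>U. (\<forall>n\<in>u. q \<in> X n) \<or> (\<forall>n\<in>u. \<forall>r\<in>PT H. r \<subseteq> q \<longrightarrow> r \<notin> X n))"
proof -
  have U: "ultrafilter_on_nat U"
    using assms(3) unfolding p_point_def by blast
  obtain q ll where q: "q \<in> PT H" "q \<subseteq> p" "strict_mono ll"
    "\<And>m \<eta>. \<eta> \<in> q \<Longrightarrow> ll m \<le> length \<eta> \<Longrightarrow> decides (PT H) X (subtree q \<eta>) m"
    using fusion[OF assms(1,2) X p] by blast
  obtain \<sigma> c where "\<sigma> \<in> q" "\<And>\<nu>. \<nu> \<in> q \<Longrightarrow> is_prefix \<sigma> \<nu> \<Longrightarrow>
      \<exists>x. is_branch q x \<and> init_seg x (length \<nu>) = \<nu> \<and> {m. (subtree q (init_seg x (ll m)) \<in> X m) = c} \<in> U"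
    using homogeneous_node[OF q(1) assms(2) U, of "\<lambda>x m. subtree q (init_seg x (ll m)) \<in> X m"]
    by blast
  then interpret homogeneous_cone H U X q ll c \<sigma>
    using assms q by unfold_locales blast+
  show ?thesis
    using tree_PT tree_subset q(2) good_set_in_U tree_decides_good_set by blast
qed

theorem lemma2p22:
  fixes H :: "nat \<Rightarrow> 'a set" and U :: "nat set set"
  assumes "\<And>n. finite (H n)" and "\<And>n. card (H n) \<ge> 2"
    and "p_point U"
  shows "forces_generates_ultrafilter (PT H) U"
  unfolding forces_generates_ultrafilter_def
proof (intro allI impI ballI)
  fix X p
  assume X: "set_name (PT H) X" and p: "p \<in> PT H"
  have H_nonempty: "H n \<noteq> {}" for n
    using assms(2)[of n] by auto
  show "\<exists>q\<in>PT H. q \<subseteq> p \<and> (\<exists>u\<in>U. (\<forall>n\<in>u. q \<in> X n) \<or> (\<forall>n\<in>u. \<forall>r\<in>PT H. r \<subseteq> q \<longrightarrow> r \<notin> X n))"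
  proof (cases "\<exists>k. {k} \<in> U")
    case True
    then show ?thesis
      using principal_point_decided[OF X p] by blast
  next
    case False
    then show ?thesis
      using nonprincipal_p_point_decided[OF assms(1) H_nonempty assms(3) _ X p] by blast
  qed
qed

end
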